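(* Let $(\mu,u)$ be a classical structure on $A$ with spiders $\Xi_n^m$ and classical channel $C_\Xi$, and let $H:A\to A$ be a complementary endomorphism for it. Then: (i) for every normalized pure classical element $e:\mathrm I\to A$, $C_\Xi\circ H\circ e=\bot_A$; (ii) $C_\Xi\circ H\circ C_\Xi=\bot_A\circ\top_A$.
   Context: Setting. $\mathbf C$ is a strict symmetric monoidal category with monoidal unit $\mathrm I$, symmetry $\sigma$, and a dagger functor $(-)^\dagger$ (identity on objects, contravariant, involutive, strict monoidal). $\mathbf C^{pure}$ is a subcategory of $\mathbf C$ with the same objects, closed under $\otimes$ and $\dagger$, containing identities, symmetries and the maps $\eta_A$ below. Every object $A$ is self-dual: there is $\eta_A:\mathrm I\to A\otimes A$ in $\mathbf C^{pure}$ with $\epsilon_A:=\eta_A^\dagger$, $(\epsilon_A\otimes 1_A)\circ(1_A\otimes\eta_A)=1_A$ and $\sigma_{A,A}\circ\eta_A=\eta_A$. A morphism $U$ is unitary if $U^\dagger\circ U=1$ and $U\circ U^\dagger=1$. Environment structure: a family of morphisms $\top_A:A\to\mathrm I$ in $\mathbf C$ such that (E1) for all objects $A,B$ and all $f,g\in\mathbf C^{pure}(A,B)$: $f^\dagger\circ f=g^\dagger\circ g$ if and only if $\top_B\circ f=\top_B\circ g$; (E2) $\top_{A\otimes B}=\top_A\otimes\top_B$; (E3) $(1_A\otimes\top_A)\circ\eta_A=\bot_A$, where $\bot_A:=\top_A^\dagger:\mathrm I\to A$. An element $\psi:\mathrm I\to A$ is normalized if $\top_A\circ\psi=1_{\mathrm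 I}$. Classical structure on $A$: morphisms $\mu:A\otimes A\to A$ and $u:\mathrm I\to A$ in $\mathbf C^{pure}$, with $\delta:=\mu^\dagger$, such that $\mu$ is associative with unit $u$, $\mu\circ\sigma_{A,A}=\mu$, $(1_A\otimes\mu)\circ(\delta\otimes 1_A)=\delta\circ\mu$, $\mu\circ\delta=1_A$, and $\eta_A=\delta\circ u$. Spiders: $\mu_0:=u$, $\mu_1:=1_A$, $\mu_{k+1}:=\mu\circ(\mu_k\otimes 1_A)$, and $\Xi_n^m:=\mu_m^\dagger\circ\mu_n:A^{\otimes n}\to A^{\otimes m}$. A pure classical element is $e:\mathrm I\to A$ in $\mathbf C^{pure}$ with $\Xi_1^2\circ e=e\otimes e$. The classical channel is $C_\Xi:=(1_A\otimes\top_A)\circ\Xi_1^2:A\to A$. Complementary endomorphism: $H:A\to A$ in $\mathbf C^{pure}$ with $(H\otimes 1_A)\circ\eta_A=(1_A\otimes H)\circ\eta_A$, $H^\dagger=H$, $H$ unitary, and $\Xi_2^1\circ(H\otimes H)\circ\Xi_1^2=\Xi_0^1\circ\Xi_1^0$ (i.e. $\mu\circ(H\otimes H)\circ\delta=u\circ u^\dagger$). *)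

theory Defs
  imports Main
begin

text \<open>A strict symmetric monoidal dagger category with a distinguished subcategory
of pure morphisms and chosen self-duality maps, bundled as a record.
Every element of type 'o is an object and every element of type 'm is a morphism
(with domain Dom and codomain Cod); composition Comp g f (g after f) is only
constrained when Cod f = Dom g.\<close>

record ('o, 'm) dsmc =
  Dom  :: "'m \<Rightarrow> 'o"
  Cod  :: "'m \<Rightarrow> 'o"
  Comp :: "'m \<Rightarrow> 'm \<Rightarrow> 'm"
  Id   :: "'o \<Rightarrow> 'm"
  TOb  :: "'o \<Rightarrow> 'o \<Rightarrow> 'o"
  Tm   :: "'m \<Rightarrow> 'm \<Rightarrow> 'm"
  Unit :: "'o"
  Sym  :: "'o \<Rightarrow> 'o \<Rightarrow> 'm"
  Dag  :: "'m \<Rightarrow> 'm"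
  Pure :: "'m \<Rightarrow> bool"
  Eta  :: "'o \<Rightarrow> 'm"

definition hom :: "('o, 'm) dsmc \<Rightarrow> 'm \<Rightarrow> 'o \<Rightarrow> 'o \<Rightarrow> bool" where
  "hom C f A B \<longleftrightarrow> Dom C f = A \<and> Cod C f = B"

locale dagger_smc =
  fixes C :: "('o, 'm) dsmc"
  assumes comp_dom: "\<And>f g. Cod C f = Dom C g \<Longrightarrow> Dom C (Comp C g f) = Dom C f"
      and comp_cod: "\<And>f g. Cod C f = Dom C g \<Longrightarrow> Cod C (Comp C g f) = Cod C g"
      and comp_assoc: "\<And>f g h. Cod C f = Dom C g \<Longrightarrow> Cod C g = Dom C h \<Longrightarrow>
                   Comp C h (Comp C g f) = Comp C (Comp C h g) f"
      and id_hom: "\<And>A. hom C (Id C A) A A"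
      and id_right: "\<And>f. Comp C f (Id C (Dom C f)) = f"
      and id_left: "\<And>f. Comp C (Id C (Cod C f)) f = f"
      and tob_assoc: "\<And>A B D. TOb C (TOb C A B) D = TOb C A (TOb C B D)"
      and tob_unit_left: "\<And>A. TOb C (Unit C) A = A"
      and tob_unit_right: "\<And>A. TOb C A (Unit C) = A"
      and tm_dom: "\<And>f g. Dom C (Tm C f g) = TOb C (Dom C f) (Dom C g)"
      and tm_cod: "\<And>f g. Cod C (Tm C f g) = TOb C (Cod C f) (Cod C g)"
      and tm_assoc: "\<And>f g h. Tm C (Tm C f g) h = Tm C f (Tm C g h)"
      and tm_unit_left: "\<And>f. Tm C (Id C (Unit C)) f = f"
      and tm_unit_right: "\<And>f. Tm C f (Id C (Unit C)) = f"
      and tm_id: "\<And>A B. Tm C (Id C A) (Id C B) = Id C (TOb C A B)"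
      and interchange: "\<And>f g f' g'. Cod C f = Dom C g \<Longrightarrow> Cod C f' = Dom C g' \<Longrightarrow>
                   Tm C (Comp C g f) (Comp C g' f') = Comp C (Tm C g g') (Tm C f f')"
      and sym_hom: "\<And>A B. hom C (Sym C A B) (TOb C A B) (TOb C B A)"
      and sym_natural: "\<And>f g. Comp C (Sym C (Cod C f) (Cod C g)) (Tm C f g)
                              = Comp C (Tm C g f) (Sym C (Dom C f) (Dom C g))"
      and sym_inv: "\<And>A B. Comp C (Sym C B A) (Sym C A B) = Id C (TOb C A B)"
      and sym_hexagon: "\<And>A B D. Sym C A (TOb C B D)
                   = Comp C (Tm C (Id C B) (Sym C A D)) (Tm C (Sym C A B) (Id C D))"
      and dag_dom: "\<And>f. Dom C (Dag C f) = Cod C f"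
      and dag_cod: "\<And>f. Cod C (Dag C f) = Dom C f"
      and dag_comp: "\<And>f g. Cod C f = Dom C g \<Longrightarrow>
                   Dag C (Comp C g f) = Comp C (Dag C f) (Dag C g)"
      and dag_dag: "\<And>f. Dag C (Dag C f) = f"
      and dag_id: "\<And>A. Dag C (Id C A) = Id C A"
      and dag_tm: "\<And>f g. Dag C (Tm C f g) = Tm C (Dag C f) (Dag C g)"
      and dag_sym: "\<And>A B. Dag C (Sym C A B) = Sym C B A"
      and pure_id: "\<And>A. Pure C (Id C A)"
      and pure_comp: "\<And>f g. Pure C f \<Longrightarrow> Pure C g \<Longrightarrow> Cod C f = Dom C g \<Longrightarrow> Pure C (Comp C g f)"
      and pure_tm: "\<And>f g. Pure C f \<Longrightarrow> Pure C g \<Longrightarrow> Pure C (Tm C f g)"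
      and pure_dag: "\<And>f. Pure C f \<Longrightarrow> Pure C (Dag C f)"
      and pure_sym: "\<And>A B. Pure C (Sym C A B)"
      and pure_eta: "\<And>A. Pure C (Eta C A)"
      and eta_hom: "\<And>A. hom C (Eta C A) (Unit C) (TOb C A A)"
      and snake: "\<And>A. Comp C (Tm C (Dag C (Eta C A)) (Id C A)) (Tm C (Id C A) (Eta C A)) = Id C A"
      and eta_sym: "\<And>A. Comp C (Sym C A A) (Eta C A) = Eta C A"

locale environment = dagger_smc C for C :: "('o, 'm) dsmc" +
  fixes tp :: "'o \<Rightarrow> 'm"
  assumes top_hom: "\<And>A. hom C (tp A) A (Unit C)"
      and E1: "\<And>A B f g. Pure C f \<Longrightarrow> Pure C g \<Longrightarrow> hom C f A B \<Longrightarrow> hom C g A B \<Longrightarrow>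
                 (Comp C (Dag C f) f = Comp C (Dag C g) g
                   \<longleftrightarrow> Comp C (tp B) f = Comp C (tp B) g)"
      and E2: "\<And>A B. tp (TOb C A B) = Tm C (tp A) (tp B)"
      and E3: "\<And>A. Comp C (Tm C (Id C A) (tp A)) (Eta C A) = Dag C (tp A)"

definition bottom :: "('o, 'm) dsmc \<Rightarrow> ('o \<Rightarrow> 'm) \<Rightarrow> 'o \<Rightarrow> 'm" where
  "bottom C tp A = Dag C (tp A)"

definition normalized :: "('o, 'm) dsmc \<Rightarrow> ('o \<Rightarrow> 'm) \<Rightarrow> 'o \<Rightarrow> 'm \<Rightarrow> bool" where
  "normalized C tp A psi \<longleftrightarrow> hom C psi (Unit C) A \<and> Comp C (tp A) psi = Id C (Unit C)"

definition unitary :: "('o, 'm) dsmc \<Rightarrow> 'm \<Rightarrow> bool" where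
  "unitary C U \<longleftrightarrow> Comp C (Dag C U) U = Id C (Dom C U) \<and> Comp C U (Dag C U) = Id C (Cod C U)"

definition classical_structure :: "('o, 'm) dsmc \<Rightarrow> 'o \<Rightarrow> 'm \<Rightarrow> 'm \<Rightarrow> bool" where
  "classical_structure C A mu u \<longleftrightarrow>
     hom C mu (TOb C A A) A \<and> hom C u (Unit C) A \<and> Pure C mu \<and> Pure C u \<and>
     Comp C mu (Tm C mu (Id C A)) = Comp C mu (Tm C (Id C A) mu) \<and>
     Comp C mu (Tm C u (Id C A)) = Id C A \<and>
     Comp C mu (Tm C (Id C A) u) = Id C A \<and>
     Comp C mu (Sym C A A) = mu \<and>
     Comp C (Tm C (Id C A) mu) (Tm C (Dag C mu) (Id C A)) = Comp C (Dag C mu) mu \<and>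
     Comp C mu (Dag C mu) = Id C A \<and>
     Eta C A = Comp C (Dag C mu) u"

fun spider_mu :: "('o, 'm) dsmc \<Rightarrow> 'o \<Rightarrow> 'm \<Rightarrow> 'm \<Rightarrow> nat \<Rightarrow> 'm" where
  "spider_mu C A mu u 0 = u"
| "spider_mu C A mu u (Suc 0) = Id C A"
| "spider_mu C A mu u (Suc (Suc k)) = Comp C mu (Tm C (spider_mu C A mu u (Suc k)) (Id C A))"

definition Xi :: "('o, 'm) dsmc \<Rightarrow> 'o \<Rightarrow> 'm \<Rightarrow> 'm \<Rightarrow> nat \<Rightarrow> nat \<Rightarrow> 'm" where
  "Xi C A mu u n m = Comp C (Dag C (spider_mu C A mu u m)) (spider_mu C A mu u n)"

definition pure_classical_element :: "('o, 'm) dsmc \<Rightarrow> 'o \<Rightarrow> 'm \<Rightarrow> 'm \<Rightarrow> 'm \<Rightarrow> bool" where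
  "pure_classical_element C A mu u e \<longleftrightarrow>
     hom C e (Unit C) A \<and> Pure C e \<and> Comp C (Xi C A mu u 1 2) e = Tm C e e"

definition classical_channel :: "('o, 'm) dsmc \<Rightarrow> ('o \<Rightarrow> 'm) \<Rightarrow> 'o \<Rightarrow> 'm \<Rightarrow> 'm \<Rightarrow> 'm" where
  "classical_channel C tp A mu u = Comp C (Tm C (Id C A) (tp A)) (Xi C A mu u 1 2)"

definition complementary :: "('o, 'm) dsmc \<Rightarrow> 'o \<Rightarrow> 'm \<Rightarrow> 'm \<Rightarrow> 'm \<Rightarrow> bool" where
  "complementary C A mu u H \<longleftrightarrow>
     hom C H A A \<and> Pure C H \<and>
     Comp C (Tm C H (Id C A)) (Eta C A) = Comp C (Tm C (Id C A) H) (Eta C A) \<and>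
     Dag C H = H \<and> unitary C H \<and>
     Comp C (Comp C (Xi C A mu u 2 1) (Tm C H H)) (Xi C A mu u 1 2)
       = Comp C (Xi C A mu u 0 1) (Xi C A mu u 1 0)"

end

theory Submission
  imports Defs
begin

(*
  Write d = mu^dagger and let
    W = (mu (x) 1) o (1 (x) (H (x) 1) o d) : A (x) A -> A (x) A.
  Using the Frobenius law, the description of the copy map d = (1 (x) mu) o (eta (x) 1)
  through the cup eta, and the complementarity equation mu o (H (x) H) o d = u o u^dagger,
  one shows that W is an isometry, W^dagger o W = 1.  Since W is pure, axiom (E1) gives
  top o W = top.  Bending wires with the cup exhibits C_Xi o H o C_Xi as
  (1 (x) top) o (1 (x) W) o (eta (x) 1), so W can be discarded and (E3) yields
  bot o top: this is part (ii).  Part (i) follows because C_Xi fixes every normalized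
  pure classical element e, so C_Xi o H o e = C_Xi o H o C_Xi o e = bot o top o e = bot.
*)

context dagger_smc
begin

abbreviation cmp (infixr "\<cdot>" 55) where "g \<cdot> f \<equiv> Comp C g f"
abbreviation tns (infixr "\<otimes>" 60) where "f \<otimes> g \<equiv> Tm C f g"

lemma id_dom [simp]: "Dom C (Id C X) = X" and id_cod [simp]: "Cod C (Id C X) = X"
  using id_hom unfolding hom_def by auto

lemma eta_dom [simp]: "Dom C (Eta C X) = Unit C"
  and eta_cod [simp]: "Cod C (Eta C X) = TOb C X X"
  using eta_hom unfolding hom_def by auto

declare comp_dom [simp] comp_cod [simp] tm_dom [simp] tm_cod [simp] dag_dom [simp] dag_cod [simp]
  tob_assoc [simp] tob_unit_left [simp] tob_unit_right [simp] dag_dag [simp] dag_id [simp]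
  dag_tm [simp] tm_id [simp] tm_unit_left [simp] tm_unit_right [simp] tm_assoc [simp]

lemma id_left_at [simp]: "Cod C f = X \<Longrightarrow> Id C X \<cdot> f = f"
  using id_left by auto

lemma id_right_at [simp]: "Dom C f = X \<Longrightarrow> f \<cdot> Id C X = f"
  using id_right by auto

lemma interchange':
  "Cod C f = Dom C g \<Longrightarrow> Cod C f' = Dom C g' \<Longrightarrow> (g \<otimes> g') \<cdot> (f \<otimes> f') = (g \<cdot> f) \<otimes> (g' \<cdot> f')"
  using interchange by simp

lemma id_tensor_merge [simp]: "Id C X \<otimes> (Id C Y \<otimes> f) = Id C (TOb C X Y) \<otimes> f"
  by (simp flip: tm_assoc)

end

locale classical_object = dagger_smc C for C :: "('o, 'm) dsmc" +
  fixes A :: 'o and mu u :: 'm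
  assumes classical: "classical_structure C A mu u"
begin

abbreviation "I \<equiv> Unit C"
abbreviation "AA \<equiv> TOb C A A"
abbreviation "one \<equiv> Id C A"
abbreviation "d \<equiv> Dag C mu"
abbreviation "eta \<equiv> Eta C A"

lemma mu_dom [simp]: "Dom C mu = AA" and mu_cod [simp]: "Cod C mu = A"
  and u_dom [simp]: "Dom C u = I" and u_cod [simp]: "Cod C u = A"
  and pure_mu: "Pure C mu"
  and mu_assoc: "mu \<cdot> (mu \<otimes> one) = mu \<cdot> (one \<otimes> mu)"
  and unit_left: "mu \<cdot> (u \<otimes> one) = one" and unit_right: "mu \<cdot> (one \<otimes> u) = one"
  and frobenius: "(one \<otimes> mu) \<cdot> (d \<otimes> one) = d \<cdot> mu"
  and eta_def': "eta = d \<cdot> u"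
  using classical unfolding classical_structure_def hom_def by auto

lemma Xi_1_2: "Xi C A mu u 1 2 = d"
  by (simp add: Xi_def numeral_2_eq_2 id_right[of mu, simplified] id_right[of d, simplified])

lemma Xi_2_1: "Xi C A mu u 2 1 = mu"
  by (simp add: Xi_def numeral_2_eq_2 id_right[of mu, simplified] id_left[of mu, simplified])

lemma Xi_0_1: "Xi C A mu u 0 1 = u"
  by (simp add: Xi_def id_left[of u, simplified])

lemma Xi_1_0: "Xi C A mu u 1 0 = Dag C u"
  by (simp add: Xi_def id_right[of "Dag C u", simplified])

lemma copy_via_cup: "(one \<otimes> mu) \<cdot> (eta \<otimes> one) = d"
proof -
  have "eta \<otimes> one = (d \<otimes> one) \<cdot> (u \<otimes> one)" by (simp add: interchange' eta_def')
  then have "(one \<otimes> mu) \<cdot> (eta \<otimes> one) = ((one \<otimes> mu) \<cdot> (d \<otimes> one)) \<cdot> (u \<otimes> one)"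
    by (simp add: comp_assoc)
  also have "\<dots> = d \<cdot> (mu \<cdot> (u \<otimes> one))" by (simp add: frobenius comp_assoc)
  also have "\<dots> = d" by (simp add: unit_left)
  finally show ?thesis .
qed

lemma copy_coassoc: "(d \<otimes> one) \<cdot> d = (one \<otimes> d) \<cdot> d"
proof -
  have "Dag C (mu \<cdot> (mu \<otimes> one)) = Dag C (mu \<cdot> (one \<otimes> mu))" by (simp add: mu_assoc)
  thus ?thesis by (simp add: dag_comp)
qed

lemma copy_counit: "(one \<otimes> Dag C u) \<cdot> d = one"
proof -
  have "Dag C (mu \<cdot> (one \<otimes> u)) = Dag C one" by (simp add: unit_right)
  thus ?thesis by (simp add: dag_comp)
qed

text \<open>A map of the form (1 (x) mu)(X (x) 1) d is determined by its value on the cup: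
  this is the bending of wires that turns an operator into a state.\<close>

lemma module_map_via_cup:
  assumes xd: "Dom C X = A" and xc: "Cod C X = AA"
  shows "(one \<otimes> mu) \<cdot> ((X \<otimes> one) \<cdot> d)
       = (one \<otimes> mu) \<cdot> ((((one \<otimes> mu) \<cdot> (X \<otimes> one)) \<cdot> eta) \<otimes> one)"
proof -
  have 1: "(X \<otimes> one) \<cdot> (one \<otimes> mu) = (Id C AA \<otimes> mu) \<cdot> (X \<otimes> Id C AA)"
    using interchange'[of one X mu one] interchange'[of X "Id C AA" "Id C AA" mu] xd xc by simp
  have 2: "(X \<otimes> Id C AA) \<cdot> (eta \<otimes> one) = ((X \<otimes> one) \<cdot> eta) \<otimes> one"
    using interchange'[of eta "X \<otimes> one" one one] xd xc by simp
  have 3: "(one \<otimes> mu) \<cdot> (Id C AA \<otimes> mu) = (one \<otimes> mu) \<cdot> (one \<otimes> (mu \<otimes> one))"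
    using interchange'[of one one "one \<otimes> mu" mu] interchange'[of one one "mu \<otimes> one" mu]
    by (simp add: mu_assoc)
  have 4: "(one \<otimes> (mu \<otimes> one)) \<cdot> (((X \<otimes> one) \<cdot> eta) \<otimes> one)
         = ((one \<otimes> mu) \<cdot> ((X \<otimes> one) \<cdot> eta)) \<otimes> one"
    using interchange'[of "(X \<otimes> one) \<cdot> eta" "one \<otimes> mu" one one] xd xc by simp
  have "(one \<otimes> mu) \<cdot> ((X \<otimes> one) \<cdot> d)
      = (one \<otimes> mu) \<cdot> (((X \<otimes> one) \<cdot> (one \<otimes> mu)) \<cdot> (eta \<otimes> one))"
    unfolding copy_via_cup[symmetric] using xd xc by (simp add: comp_assoc)
  also have "\<dots> = ((one \<otimes> mu) \<cdot> (Id C AA \<otimes> mu)) \<cdot> ((X \<otimes> Id C AA) \<cdot> (eta \<otimes> one))"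
    unfolding 1 using xd xc by (simp add: comp_assoc)
  also have "\<dots> = (one \<otimes> mu) \<cdot> ((one \<otimes> (mu \<otimes> one)) \<cdot> (((X \<otimes> one) \<cdot> eta) \<otimes> one))"
    unfolding 2 3 using xd xc by (simp add: comp_assoc)
  also have "\<dots> = (one \<otimes> mu) \<cdot> ((((one \<otimes> mu) \<cdot> (X \<otimes> one)) \<cdot> eta) \<otimes> one)"
    unfolding 4 using xd xc by (simp add: comp_assoc)
  finally show ?thesis .
qed

end

text \<open>The map
  W = (mu (x) 1)(1 (x) hdelta), with hdelta = (H (x) 1) d, is the isometry at the heart
  of the proof; Kmap is the middle part of W^dagger W after the Frobenius law is applied.\<close>

locale complementary_object = classical_object C A mu u
  for C :: "('o, 'm) dsmc" and A mu u +
  fixes H :: 'm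
  assumes complementary: "complementary C A mu u H"
begin

lemma H_dom [simp]: "Dom C H = A" and H_cod [simp]: "Cod C H = A" and pure_H: "Pure C H"
  and H_transpose: "(H \<otimes> one) \<cdot> eta = (one \<otimes> H) \<cdot> eta"
  and H_self_adjoint [simp]: "Dag C H = H"
  using complementary unfolding complementary_def hom_def by auto

lemma complementarity: "mu \<cdot> (H \<otimes> H) \<cdot> d = u \<cdot> Dag C u"
proof -
  have "(Xi C A mu u 2 1 \<cdot> (H \<otimes> H)) \<cdot> Xi C A mu u 1 2 = Xi C A mu u 0 1 \<cdot> Xi C A mu u 1 0"
    using complementary unfolding complementary_def by auto
  thus ?thesis unfolding Xi_1_2 Xi_2_1 Xi_0_1 Xi_1_0 by (simp add: comp_assoc)
qed

abbreviation "hdelta \<equiv> (H \<otimes> one) \<cdot> d"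
abbreviation "W \<equiv> (mu \<otimes> one) \<cdot> (one \<otimes> hdelta)"
abbreviation "Kmap \<equiv> (Dag C hdelta \<cdot> (mu \<otimes> one)) \<cdot> (one \<otimes> hdelta)"
abbreviation "Kbent \<equiv> (one \<otimes> Kmap) \<cdot> (eta \<otimes> one)"

text \<open>W bent around the cup: the form in which W appears inside C_Xi H C_Xi.\<close>

lemma W_on_cup: "(one \<otimes> W) \<cdot> (eta \<otimes> one) = (d \<otimes> one) \<cdot> hdelta"
proof -
  have 1: "one \<otimes> W = (one \<otimes> (mu \<otimes> one)) \<cdot> (Id C AA \<otimes> hdelta)"
    using interchange'[of one one "one \<otimes> hdelta" "mu \<otimes> one"] by simp
  have 2: "(Id C AA \<otimes> hdelta) \<cdot> (eta \<otimes> one) = (eta \<otimes> Id C AA) \<cdot> hdelta"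
    using interchange'[of eta "Id C AA" one hdelta] interchange'[of "Id C I" eta hdelta "Id C AA"]
    by simp
  have 3: "(one \<otimes> (mu \<otimes> one)) \<cdot> (eta \<otimes> Id C AA) = d \<otimes> one"
    using interchange'[of "eta \<otimes> one" "one \<otimes> mu" one one] by (simp add: copy_via_cup)
  have "(one \<otimes> W) \<cdot> (eta \<otimes> one) = (one \<otimes> (mu \<otimes> one)) \<cdot> ((Id C AA \<otimes> hdelta) \<cdot> (eta \<otimes> one))"
    by (simp add: 1 comp_assoc)
  also have "\<dots> = ((one \<otimes> (mu \<otimes> one)) \<cdot> (eta \<otimes> Id C AA)) \<cdot> hdelta"
    by (simp add: 2 comp_assoc)
  also have "\<dots> = (d \<otimes> one) \<cdot> hdelta" by (simp add: 3)
  finally show ?thesis .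
qed

text \<open>By the Frobenius law, W^dagger W only acts non-trivially through Kmap.\<close>

lemma W_adjoint_W: "Dag C W \<cdot> W = (one \<otimes> Kmap) \<cdot> (d \<otimes> one)"
proof -
  have dw: "Dag C W = (one \<otimes> Dag C hdelta) \<cdot> (d \<otimes> one)" by (simp add: dag_comp)
  have 1: "(d \<otimes> one) \<cdot> (mu \<otimes> one) = (one \<otimes> (mu \<otimes> one)) \<cdot> (d \<otimes> Id C AA)"
    using interchange'[of mu d one one] interchange'[of "d \<otimes> one" "one \<otimes> mu" one one]
    by (simp add: frobenius)
  have 2: "(d \<otimes> Id C AA) \<cdot> (one \<otimes> hdelta) = (Id C AA \<otimes> hdelta) \<cdot> (d \<otimes> one)"
    using interchange'[of one d hdelta "Id C AA"] interchange'[of d "Id C AA" one hdelta] by simp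
  have 3: "(one \<otimes> Dag C hdelta) \<cdot> (one \<otimes> (mu \<otimes> one)) = one \<otimes> (Dag C hdelta \<cdot> (mu \<otimes> one))"
    using interchange'[of one one "mu \<otimes> one" "Dag C hdelta"] by simp
  have 4: "(one \<otimes> (Dag C hdelta \<cdot> (mu \<otimes> one))) \<cdot> (Id C AA \<otimes> hdelta) = one \<otimes> Kmap"
    using interchange'[of one one "one \<otimes> hdelta" "Dag C hdelta \<cdot> (mu \<otimes> one)"] by simp
  have "Dag C W \<cdot> W = (one \<otimes> Dag C hdelta) \<cdot> (((d \<otimes> one) \<cdot> (mu \<otimes> one)) \<cdot> (one \<otimes> hdelta))"
    unfolding dw by (simp add: comp_assoc)
  also have "\<dots> = ((one \<otimes> Dag C hdelta) \<cdot> (one \<otimes> (mu \<otimes> one))) \<cdot> ((d \<otimes> Id C AA) \<cdot> (one \<otimes> hdelta))"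
    unfolding 1 by (simp add: comp_assoc)
  also have "\<dots> = ((one \<otimes> (Dag C hdelta \<cdot> (mu \<otimes> one))) \<cdot> (Id C AA \<otimes> hdelta)) \<cdot> (d \<otimes> one)"
    unfolding 2 3 by (simp add: comp_assoc)
  also have "\<dots> = (one \<otimes> Kmap) \<cdot> (d \<otimes> one)" unfolding 4 ..
  finally show ?thesis .
qed

lemma W_unit: "W \<cdot> (u \<otimes> one) = hdelta"
proof -
  have 1: "(one \<otimes> hdelta) \<cdot> (u \<otimes> one) = (u \<otimes> Id C AA) \<cdot> hdelta"
    using interchange'[of u one one hdelta] interchange'[of "Id C I" u hdelta "Id C AA"] by simp
  have 2: "(mu \<otimes> one) \<cdot> (u \<otimes> Id C AA) = Id C AA"
    using interchange'[of "u \<otimes> one" mu one one] by (simp add: unit_left)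
  have "W \<cdot> (u \<otimes> one) = (mu \<otimes> one) \<cdot> ((one \<otimes> hdelta) \<cdot> (u \<otimes> one))"
    by (simp add: comp_assoc)
  also have "\<dots> = ((mu \<otimes> one) \<cdot> (u \<otimes> Id C AA)) \<cdot> hdelta"
    unfolding 1 by (simp add: comp_assoc)
  also have "\<dots> = hdelta" unfolding 2 by simp
  finally show ?thesis .
qed

abbreviation "Z \<equiv> (one \<otimes> H) \<cdot> d"
abbreviation "ZH \<equiv> Z \<cdot> H"

lemma Kbent_module_map: "Kbent = (one \<otimes> mu) \<cdot> ((ZH \<otimes> one) \<cdot> d)"
proof -
  have "eta \<otimes> one = (d \<otimes> one) \<cdot> (u \<otimes> one)" by (simp add: interchange' eta_def')
  then have "Kbent = ((one \<otimes> Kmap) \<cdot> (d \<otimes> one)) \<cdot> (u \<otimes> one)"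
    by (simp add: comp_assoc)
  also have "\<dots> = Dag C W \<cdot> (W \<cdot> (u \<otimes> one))"
    unfolding W_adjoint_W[symmetric] by (simp add: comp_assoc)
  also have "\<dots> = Dag C W \<cdot> hdelta" unfolding W_unit ..
  finally have Kbent_W: "Kbent = Dag C W \<cdot> hdelta" .
  have dw: "Dag C W = (one \<otimes> Dag C hdelta) \<cdot> (d \<otimes> one)" by (simp add: dag_comp)
  have 1: "one \<otimes> Dag C hdelta = (one \<otimes> mu) \<cdot> (one \<otimes> (H \<otimes> one))"
    using interchange'[of one one "H \<otimes> one" mu] by (simp add: dag_comp)
  have 2: "(one \<otimes> (H \<otimes> one)) \<cdot> (d \<otimes> one) = Z \<otimes> one"
    using interchange'[of d "one \<otimes> H" one one] by simp
  have 3: "(Z \<otimes> one) \<cdot> (H \<otimes> one) = ZH \<otimes> one"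
    using interchange'[of H Z one one] by simp
  have "Kbent = (one \<otimes> Dag C hdelta) \<cdot> ((d \<otimes> one) \<cdot> hdelta)"
    unfolding Kbent_W dw by (simp add: comp_assoc)
  also have "\<dots> = (one \<otimes> mu) \<cdot> ((((one \<otimes> (H \<otimes> one)) \<cdot> (d \<otimes> one)) \<cdot> (H \<otimes> one)) \<cdot> d)"
    unfolding 1 by (simp add: comp_assoc)
  also have "\<dots> = (one \<otimes> mu) \<cdot> ((ZH \<otimes> one) \<cdot> d)" unfolding 2 3 ..
  finally show ?thesis .
qed

text \<open>Sliding H through the cup and using coassociativity brings both copies of H onto
  the outputs of a single copy map, where complementarity applies.\<close>

lemma ZH_on_cup: "(ZH \<otimes> one) \<cdot> eta = (one \<otimes> ((H \<otimes> H) \<cdot> d)) \<cdot> (d \<cdot> u)"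
proof -
  have 1: "ZH \<otimes> one = (Z \<otimes> one) \<cdot> (H \<otimes> one)" using interchange'[of H Z one one] by simp
  have 2: "(Z \<otimes> one) \<cdot> (one \<otimes> H) = (Id C AA \<otimes> H) \<cdot> (Z \<otimes> one)"
    using interchange'[of one Z H one] interchange'[of Z "Id C AA" one H] by simp
  have 3: "Z \<otimes> one = (one \<otimes> (H \<otimes> one)) \<cdot> (d \<otimes> one)"
    using interchange'[of d "one \<otimes> H" one one] by simp
  have 4: "(Id C AA \<otimes> H) \<cdot> (one \<otimes> (H \<otimes> one)) = one \<otimes> (H \<otimes> H)"
    using interchange'[of one one "H \<otimes> one" "one \<otimes> H"] interchange'[of H one one H] by simp
  have 5: "(one \<otimes> (H \<otimes> H)) \<cdot> (one \<otimes> d) = one \<otimes> ((H \<otimes> H) \<cdot> d)"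
    using interchange'[of one one d "H \<otimes> H"] by simp
  have "(ZH \<otimes> one) \<cdot> eta = (Z \<otimes> one) \<cdot> ((H \<otimes> one) \<cdot> eta)"
    unfolding 1 by (simp add: comp_assoc)
  also have "\<dots> = ((Z \<otimes> one) \<cdot> (one \<otimes> H)) \<cdot> eta"
    unfolding H_transpose by (simp add: comp_assoc)
  also have "\<dots> = ((Id C AA \<otimes> H) \<cdot> (one \<otimes> (H \<otimes> one))) \<cdot> (((d \<otimes> one) \<cdot> d) \<cdot> u)"
    unfolding 2 unfolding 3 eta_def' by (simp add: comp_assoc)
  also have "\<dots> = (one \<otimes> ((H \<otimes> H) \<cdot> d)) \<cdot> (d \<cdot> u)"
    unfolding 4 copy_coassoc 5[symmetric] by (simp add: comp_assoc)
  finally show ?thesis .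
qed

lemma ZH_state: "((one \<otimes> mu) \<cdot> (ZH \<otimes> one)) \<cdot> eta = u \<otimes> u"
proof -
  have 1: "(one \<otimes> mu) \<cdot> (one \<otimes> ((H \<otimes> H) \<cdot> d)) = (one \<otimes> u) \<cdot> (one \<otimes> Dag C u)"
    using interchange'[of one one "(H \<otimes> H) \<cdot> d" mu] interchange'[of one one "Dag C u" u]
      complementarity
    by (simp add: comp_assoc)
  have 2: "(one \<otimes> u) \<cdot> u = u \<otimes> u"
  proof -
    have "(one \<otimes> u) \<cdot> (u \<otimes> Id C I) = (one \<cdot> u) \<otimes> (u \<cdot> Id C I)"
      by (rule interchange') simp_all
    thus ?thesis by simp
  qed
  have "((one \<otimes> mu) \<cdot> (ZH \<otimes> one)) \<cdot> eta = (one \<otimes> mu) \<cdot> ((ZH \<otimes> one) \<cdot> eta)"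
    by (simp add: comp_assoc)
  also have "\<dots> = ((one \<otimes> mu) \<cdot> (one \<otimes> ((H \<otimes> H) \<cdot> d))) \<cdot> (d \<cdot> u)"
    unfolding ZH_on_cup by (simp add: comp_assoc)
  also have "\<dots> = (one \<otimes> u) \<cdot> (((one \<otimes> Dag C u) \<cdot> d) \<cdot> u)"
    unfolding 1 by (simp add: comp_assoc)
  also have "\<dots> = u \<otimes> u" unfolding copy_counit using 2 by simp
  finally show ?thesis .
qed

text \<open>Combining the two descriptions of Kbent with complementarity: the bent form of
  Kmap is u (x) 1.\<close>

lemma Kbent_eq: "Kbent = u \<otimes> one"
proof -
  have "Kbent = (one \<otimes> mu) \<cdot> ((u \<otimes> u) \<otimes> one)"
    unfolding Kbent_module_map module_map_via_cup[of ZH, simplified] ZH_state[symmetric]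
    by (simp add: comp_assoc)
  also have "\<dots> = u \<otimes> one"
    using interchange'[of u one "u \<otimes> one" mu] by (simp add: unit_left)
  finally show ?thesis .
qed

text \<open>Unbending with the snake equation: Kmap discards its first input.\<close>

lemma Kmap_eq: "Kmap = Dag C u \<otimes> one"
proof -
  let ?e = "Dag C eta"
  have 1: "one \<otimes> Kbent = (Id C AA \<otimes> Kmap) \<cdot> (one \<otimes> (eta \<otimes> one))"
    using interchange'[of one one "eta \<otimes> one" "one \<otimes> Kmap"] by simp
  have 2: "(?e \<otimes> one) \<cdot> (Id C AA \<otimes> Kmap) = Kmap \<cdot> (?e \<otimes> Id C AA)"
    using interchange'[of "Id C AA" ?e Kmap one] interchange'[of ?e "Id C I" "Id C AA" Kmap] by simp
  have 3: "(?e \<otimes> Id C AA) \<cdot> (one \<otimes> (eta \<otimes> one)) = Id C AA"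
    using interchange'[of "one \<otimes> eta" "?e \<otimes> one" one one] snake[of A] by simp
  have 4: "(?e \<otimes> one) \<cdot> (one \<otimes> (u \<otimes> one)) = Dag C u \<otimes> one"
  proof -
    have "(?e \<otimes> one) \<cdot> (one \<otimes> (u \<otimes> one)) = (?e \<cdot> (one \<otimes> u)) \<otimes> one"
      using interchange'[of "one \<otimes> u" ?e one one] by simp
    also have "?e \<cdot> (one \<otimes> u) = Dag C u"
      unfolding eta_def' by (simp add: dag_comp comp_assoc[symmetric] unit_right)
    finally show ?thesis .
  qed
  have "Kmap = Kmap \<cdot> ((?e \<otimes> Id C AA) \<cdot> (one \<otimes> (eta \<otimes> one)))"
    using 3 by simp
  also have "\<dots> = ((?e \<otimes> one) \<cdot> (Id C AA \<otimes> Kmap)) \<cdot> (one \<otimes> (eta \<otimes> one))"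
    unfolding 2 by (simp add: comp_assoc)
  also have "\<dots> = (?e \<otimes> one) \<cdot> (one \<otimes> Kbent)" unfolding 1 by (simp add: comp_assoc)
  also have "\<dots> = Dag C u \<otimes> one" unfolding Kbent_eq 4 ..
  finally show ?thesis .
qed

lemma W_isometry: "Dag C W \<cdot> W = Id C AA"
proof -
  have "Dag C W \<cdot> W = (one \<otimes> (Dag C u \<otimes> one)) \<cdot> (d \<otimes> one)"
    unfolding W_adjoint_W Kmap_eq ..
  also have "\<dots> = ((one \<otimes> Dag C u) \<cdot> d) \<otimes> one"
    using interchange'[of d "one \<otimes> Dag C u" one one] by simp
  also have "\<dots> = Id C AA" unfolding copy_counit by simp
  finally show ?thesis .
qed

lemma W_pure: "Pure C W"
  by (intro pure_comp pure_tm pure_id pure_mu pure_H pure_dag) simp_all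

end

lemma (in environment) discard_pure_isometry:
  assumes "Pure C W" "hom C W X X" "Comp C (Dag C W) W = Id C X"
  shows "Comp C (tp X) W = tp X"
proof -
  have "Comp C (tp X) W = Comp C (tp X) (Id C X)"
    using E1[of W "Id C X" X X] assms pure_id id_hom by (simp add: dag_id id_right[of "Id C X"])
  thus ?thesis using top_hom id_right unfolding hom_def by metis
qed

locale complementary_environment =
  environment C tp + complementary_object C A mu u H
  for C :: "('o, 'm) dsmc" and tp A mu u H
begin

abbreviation "tt \<equiv> tp A"
abbreviation "Ch \<equiv> (one \<otimes> tt) \<cdot> d"

lemma tp_dom [simp]: "Dom C (tp X) = X" and tp_cod [simp]: "Cod C (tp X) = I"
  using top_hom unfolding hom_def by auto

lemma discard_W: "tp AA \<cdot> W = tp AA"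
  using discard_pure_isometry[OF W_pure _ W_isometry] by (simp add: hom_def)

text \<open>Part (ii): after bending, C_Xi H C_Xi discards the output of W, which can then be
  dropped; what remains is (1 (x) top)(eta (x) 1) = bot top by (E3).\<close>

lemma channel_H_channel: "Ch \<cdot> (H \<cdot> Ch) = Dag C tt \<cdot> tt"
proof -
  have 1: "(d \<cdot> H) \<cdot> (one \<otimes> tt) = (Id C AA \<otimes> tt) \<cdot> ((d \<otimes> one) \<cdot> (H \<otimes> one))"
    using interchange'[of one "d \<cdot> H" tt "Id C I"] interchange'[of "d \<cdot> H" "Id C AA" one tt]
      interchange'[of H d one one] by simp
  have 2: "(one \<otimes> tt) \<cdot> (Id C AA \<otimes> tt) = one \<otimes> tp AA"
    using interchange'[of one one "one \<otimes> tt" tt] interchange'[of one tt tt "Id C I"] by (simp add: E2)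
  have 3: "(one \<otimes> tp AA) \<cdot> (one \<otimes> W) = one \<otimes> tp AA"
    using interchange'[of one one W "tp AA"] discard_W by simp
  have 4: "(one \<otimes> tp AA) \<cdot> (eta \<otimes> one) = Dag C tt \<cdot> tt"
  proof -
    have "(one \<otimes> tp AA) \<cdot> (eta \<otimes> one) = ((one \<otimes> tt) \<cdot> eta) \<otimes> (tt \<cdot> one)"
      using interchange'[of eta "one \<otimes> tt" one tt] by (simp add: E2)
    also have "\<dots> = Dag C tt \<otimes> tt" using E3[of A] by simp
    also have "\<dots> = Dag C tt \<cdot> tt" using interchange'[of "Id C I" "Dag C tt" tt "Id C I"] by simp
    finally show ?thesis .
  qed
  have "Ch \<cdot> (H \<cdot> Ch) = (one \<otimes> tt) \<cdot> (((d \<cdot> H) \<cdot> (one \<otimes> tt)) \<cdot> d)"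
    by (simp add: comp_assoc)
  also have "\<dots> = ((one \<otimes> tt) \<cdot> (Id C AA \<otimes> tt)) \<cdot> ((d \<otimes> one) \<cdot> hdelta)"
    unfolding 1 by (simp add: comp_assoc)
  also have "\<dots> = ((one \<otimes> tp AA) \<cdot> (one \<otimes> W)) \<cdot> (eta \<otimes> one)"
    unfolding 2 W_on_cup[symmetric] by (simp add: comp_assoc)
  also have "\<dots> = Dag C tt \<cdot> tt" unfolding 3 4 ..
  finally show ?thesis .
qed

lemma channel_fixes_classical:
  assumes "pure_classical_element C A mu u e" and "normalized C tp A e"
  shows "Ch \<cdot> e = e"
proof -
  have ed: "Dom C e = I" and ec: "Cod C e = A" and copy: "d \<cdot> e = e \<otimes> e"
    and norm: "tt \<cdot> e = Id C I"
    using assms unfolding pure_classical_element_def normalized_def hom_def Xi_1_2 by auto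
  have "Ch \<cdot> e = (one \<otimes> tt) \<cdot> (e \<otimes> e)" using ed ec by (simp add: comp_assoc[symmetric] copy)
  also have "\<dots> = e" using interchange'[of e one e tt] ed ec norm by simp
  finally show ?thesis .
qed

lemma channel_H_classical:
  assumes "pure_classical_element C A mu u e" and "normalized C tp A e"
  shows "Ch \<cdot> (H \<cdot> e) = Dag C tt"
proof -
  have ed: "Dom C e = I" and ec: "Cod C e = A" and norm: "tt \<cdot> e = Id C I"
    using assms unfolding pure_classical_element_def normalized_def hom_def by auto
  have "Ch \<cdot> (H \<cdot> e) = Ch \<cdot> (H \<cdot> (Ch \<cdot> e))"
    unfolding channel_fixes_classical[OF assms] ..
  also have "\<dots> = (Ch \<cdot> (H \<cdot> Ch)) \<cdot> e" using ed ec by (simp add: comp_assoc)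
  also have "\<dots> = Dag C tt"
    unfolding channel_H_channel using ed ec norm by (simp add: comp_assoc[symmetric])
  finally show ?thesis .
qed

end

theorem mainTheorem2:
  fixes C :: "('o, 'm) dsmc" and tp :: "'o \<Rightarrow> 'm"
    and A :: 'o and mu u H :: 'm
  assumes "environment C tp"
    and "classical_structure C A mu u"
    and "complementary C A mu u H"
  shows "(\<forall>e. pure_classical_element C A mu u e \<and> normalized C tp A e \<longrightarrow>
            Comp C (classical_channel C tp A mu u) (Comp C H e) = bottom C tp A)
       \<and> Comp C (classical_channel C tp A mu u) (Comp C H (classical_channel C tp A mu u))
            = Comp C (bottom C tp A) (tp A)"
proof -
  interpret complementary_environment C tp A mu u H
    using assms by (simp add: complementary_environment_def classical_object_def
        classical_object_axioms_def complementary_object_def complementary_object_axioms_def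
        environment.axioms(1))
  have channel: "classical_channel C tp A mu u = Ch"
    unfolding classical_channel_def Xi_1_2 ..
  show ?thesis
    unfolding channel bottom_def using channel_H_classical channel_H_channel by auto
qed

end
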